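(* Let $f\in\mathbb{Q}[x]$ have degree $n$ and $g\in\mathbb{Q}[x]$ have degree $\le 2n-2$. Let $Q^*\in S^n(\mathbb{R})$ be positive definite with smallest eigenvalue $\sigma>0$, let $q^*\in\mathbb{R}[x]$ have degree $\le n-2$, and suppose $\rho:=\|\mathbf{x}^TQ^*\mathbf{x}+q^*f-g\|<\sigma$. Let $$0<\delta<\frac{\sigma-\rho}{n+(n-1)\sqrt n\,\|f\|}.$$ Then for every $\overline Q\in S^n(\mathbb{Q})$ and every $q\in\mathbb{Q}[x]$ of degree $\le n-2$ with $|\overline Q_{i,j}-Q^*_{i,j}|\le\delta$ for all $1\le i,j\le n$ and $|q_i-q^*_i|\le\delta$ for all $0\le i\le n-2$ (coefficients of $x^i$), the matrix $Q:=\pi_{g-qf}(\overline Q)\in S^n(\mathbb{Q})$ satisfies $g=\mathbf{x}^TQ\,\mathbf{x}+q\,f$ and is positive definite.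
   Context: $S^n(\mathbb{R})$ (resp. $S^n(\mathbb{Q})$) denotes real (resp. rational) symmetric $n\times n$ matrices; $\mathbf{x}=[1,x,\dots,x^{n-1}]^T$; $\|\cdot\|$ denotes the $2$-norm of the coefficient vector of a polynomial and the Frobenius norm of a matrix. For $p=\sum_{k=0}^{2n-2}p_kx^k$, $Q_p$ is the symmetric Hankel matrix with $(Q_p)_{i,j}=p_{i+j-2}/s_{i+j-2}$, where $s_k=k+1$ for $0\le k\le n-1$ and $s_k=2n-1-k$ for $n-1\le k\le 2n-2$; and $\pi_p(Q)=Q-Q_{\mathbf{x}^TQ\mathbf{x}-p}$ for $Q\in S^n(\mathbb{R})$. *)

theory Defs
  imports Complex_Main "HOL-Computational_Algebra.Polynomial" "Jordan_Normal_Form.Char_Poly"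
begin

definition poly_norm :: "real poly \<Rightarrow> real" where
  "poly_norm p = sqrt (\<Sum>i\<le>degree p. (coeff p i)\<^sup>2)"

(* x^T Q x for x = [1, x, ..., x^(n-1)], n = dim_row Q  (0-indexed entries) *)
definition quad_poly :: "'a::comm_ring_1 mat \<Rightarrow> 'a poly" where
  "quad_poly Q = (\<Sum>i<dim_row Q. \<Sum>j<dim_col Q. monom (Q $$ (i,j)) (i+j))"

definition hank_s :: "nat \<Rightarrow> nat \<Rightarrow> nat" where
  "hank_s n k = (if k \<le> n - 1 then k + 1 else 2*n - 1 - k)"

definition hankel_mat :: "nat \<Rightarrow> 'a::field_char_0 poly \<Rightarrow> 'a mat" where
  "hankel_mat n p = mat n n (\<lambda>(i,j). coeff p (i+j) / of_nat (hank_s n (i+j)))"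

definition proj_mat :: "nat \<Rightarrow> 'a::field_char_0 poly \<Rightarrow> 'a mat \<Rightarrow> 'a mat" where
  "proj_mat n p Q = Q - hankel_mat n (quad_poly Q - p)"

definition symmetric_mat :: "nat \<Rightarrow> 'a mat \<Rightarrow> bool" where
  "symmetric_mat n Q \<longleftrightarrow> Q \<in> carrier_mat n n \<and> transpose_mat Q = Q"

definition pos_def_mat :: "nat \<Rightarrow> real mat \<Rightarrow> bool" where
  "pos_def_mat n Q \<longleftrightarrow> symmetric_mat n Q \<and>
     (\<forall>v \<in> carrier_vec n. v \<noteq> 0\<^sub>v n \<longrightarrow> v \<bullet> (Q *\<^sub>v v) > 0)"

end

theory Submission
  imports Defs "HOL-Analysis.Function_Topology" "HOL-Analysis.L2_Norm"
begin

text \<open>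
  Put \<open>E = Qbar - Q*\<close> and \<open>p = g - qf\<close>. Since \<open>\<pi>\<^sub>p\<close> subtracts a Hankel matrix,
  \<open>\<pi>\<^sub>p(Qbar) - Q* = (E - Q\<^bsub>x\<^sup>TEx\<^esub>) - Q\<^bsub>x\<^sup>TQ*x - p\<^esub>\<close>. The first part centres every antidiagonal
  of \<open>E\<close> at its mean, so its Frobenius norm is at most that of \<open>E\<close>, hence at most \<open>n\<delta>\<close>; the
  second has Frobenius norm at most \<open>\<parallel>x\<^sup>TQ*x - p\<parallel> \<le> \<rho> + (n - 1)\<delta>\<parallel>f\<parallel>\<close>. The choice of \<open>\<delta>\<close> makes
  the sum smaller than \<open>\<sigma>\<close>, and a symmetric perturbation \<open>D\<close> with \<open>\<parallel>D\<parallel>\<^sub>F < \<sigma>\<close> keeps \<open>Q*\<close>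
  positive definite: \<open>v\<^sup>TQ*v \<ge> \<sigma>|v|\<^sup>2\<close> because the minimum of the Rayleigh quotient is an
  eigenvalue, while \<open>|v\<^sup>TDv| \<le> \<parallel>D\<parallel>\<^sub>F|v|\<^sup>2\<close> by Cauchy-Schwarz.
\<close>

section \<open>Quadratic forms and the Rayleigh quotient\<close>

definition bilinear_form :: "nat \<Rightarrow> real mat \<Rightarrow> (nat \<Rightarrow> real) \<Rightarrow> (nat \<Rightarrow> real) \<Rightarrow> real" where
  "bilinear_form n A u w = (\<Sum>i<n. \<Sum>j<n. u i * A $$ (i, j) * w j)"

abbreviation quad_form :: "nat \<Rightarrow> real mat \<Rightarrow> (nat \<Rightarrow> real) \<Rightarrow> real" where
  "quad_form n A u \<equiv> bilinear_form n A u u"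

lemma symmetric_matD:
  assumes "symmetric_mat n A" "i < n" "j < n"
  shows "A $$ (i, j) = A $$ (j, i)"
  using assms unfolding symmetric_mat_def by (metis carrier_matD index_transpose_mat(1))

lemma symmetric_mat_map: "symmetric_mat n A \<Longrightarrow> symmetric_mat n (map_mat f A)"
  unfolding symmetric_mat_def by (metis map_carrier_mat map_mat_transpose)

lemma bilinear_form_commute:
  assumes "symmetric_mat n A"
  shows "bilinear_form n A u w = bilinear_form n A w u"
proof -
  have "bilinear_form n A u w = (\<Sum>j<n. \<Sum>i<n. u i * A $$ (i, j) * w j)"
    unfolding bilinear_form_def by (rule sum.swap)
  also have "\<dots> = bilinear_form n A w u"
    unfolding bilinear_form_def using symmetric_matD[OF assms]
    by (intro sum.cong refl) (simp add: mult_ac)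
  finally show ?thesis .
qed

lemma quad_form_add_smult:
  assumes "symmetric_mat n A"
  shows "quad_form n A (\<lambda>i. w i + t * u i) =
    quad_form n A w + 2 * t * bilinear_form n A u w + t\<^sup>2 * quad_form n A u"
proof -
  have "quad_form n A (\<lambda>i. w i + t * u i) =
      quad_form n A w + t * bilinear_form n A w u + t * bilinear_form n A u w + t\<^sup>2 * quad_form n A u"
    unfolding bilinear_form_def power2_eq_square
    by (simp add: algebra_simps sum.distrib sum_distrib_left)
  then show ?thesis
    using bilinear_form_commute[OF assms, of w u] by (simp add: algebra_simps)
qed

lemma quad_form_smult: "quad_form n A (\<lambda>i. c * u i) = c\<^sup>2 * quad_form n A u"
  unfolding bilinear_form_def power2_eq_square by (simp add: sum_distrib_left algebra_simps)

lemma quad_form_cong: "(\<And>i. i < n \<Longrightarrow> u i = w i) \<Longrightarrow> quad_form n A u = quad_form n A w"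
  unfolding bilinear_form_def by (intro sum.cong) auto

lemma quad_form_diff:
  assumes "A \<in> carrier_mat n n" "B \<in> carrier_mat n n"
  shows "quad_form n (A - B) u = quad_form n A u - quad_form n B u"
  using assms unfolding bilinear_form_def by (simp add: algebra_simps sum_subtractf)

lemma scalar_prod_mult_mat_vec_eq_quad_form:
  assumes "A \<in> carrier_mat n n" "v \<in> carrier_vec n"
  shows "v \<bullet> (A *\<^sub>v v) = quad_form n A (\<lambda>i. v $ i)"
  using assms unfolding bilinear_form_def
  by (auto simp: scalar_prod_def mult_mat_vec_def lessThan_atLeast0 sum_distrib_left mult_ac
      intro!: sum.cong)

lemma continuous_map_quad_form:
  "continuous_map (product_topology (\<lambda>_. euclideanreal) {..<n}) euclideanreal (quad_form n A)"
  unfolding bilinear_form_def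
  by (intro continuous_map_sum continuous_map_real_mult continuous_map_product_projection) auto

lemma continuous_map_attains_min_on_unit_sphere:
  fixes F :: "(nat \<Rightarrow> real) \<Rightarrow> real"
  assumes n: "n > 0"
    and cont: "continuous_map (product_topology (\<lambda>_. euclideanreal) {..<n}) euclideanreal F"
  obtains w where "w \<in> PiE {..<n} (\<lambda>_. UNIV)" "(\<Sum>i<n. (w i)\<^sup>2) = 1"
    "\<And>u. u \<in> PiE {..<n} (\<lambda>_. UNIV) \<Longrightarrow> (\<Sum>i<n. (u i)\<^sup>2) = 1 \<Longrightarrow> F w \<le> F u"
proof -
  let ?X = "product_topology (\<lambda>_. euclideanreal) {..<n}"
  define C where "C = {x \<in> topspace ?X. (\<Sum>i<n. (x i)\<^sup>2) \<in> {1}}"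
  have "continuous_map ?X euclideanreal (\<lambda>x. \<Sum>i<n. (x i)\<^sup>2)"
    unfolding power2_eq_square
    by (intro continuous_map_sum continuous_map_real_mult continuous_map_product_projection) auto
  then have closed: "closedin ?X C"
    unfolding C_def by (rule closedin_continuous_map_preimage) auto
  have box: "compactin ?X (PiE {..<n} (\<lambda>_. {-1..1::real}))"
    by (subst compactin_PiE) (auto simp: compactin_euclidean_iff)
  have "C \<subseteq> PiE {..<n} (\<lambda>_. {-1..1::real})"
  proof
    fix x assume x: "x \<in> C"
    have "x i \<in> {-1..1}" if "i < n" for i
    proof -
      have "(x i)\<^sup>2 \<le> (\<Sum>i<n. (x i)\<^sup>2)" by (rule member_le_sum) (use that in auto)
      then have "\<bar>x i\<bar> \<le> \<bar>1\<bar>" using x unfolding abs_le_square_iff by (simp add: C_def)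
      then show ?thesis by auto
    qed
    then show "x \<in> PiE {..<n} (\<lambda>_. {-1..1::real})" using x by (auto simp: C_def PiE_iff)
  qed
  then have "compactin ?X C" by (rule closed_compactin[OF box _ closed])
  then have "compact (F ` C)"
    using image_compactin[OF _ cont] by (simp add: compactin_euclidean_iff)
  moreover have "F ` C \<noteq> {}"
  proof -
    define e where "e = (\<lambda>i\<in>{..<n}. if i = 0 then 1 else (0::real))"
    have "(\<Sum>i<n. (e i)\<^sup>2) = (\<Sum>i<n. if i = 0 then 1 else 0)"
      by (rule sum.cong) (auto simp: e_def)
    then have "e \<in> C" using n by (auto simp: C_def e_def)
    then show ?thesis by blast
  qed
  ultimately obtain s where "s \<in> F ` C" "\<forall>t\<in>F ` C. s \<le> t"
    using compact_attains_inf by blast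
  then obtain w where "w \<in> C" "\<forall>u\<in>C. F w \<le> F u" by blast
  then show thesis using that by (auto simp: C_def)
qed

lemma quad_form_min_on_unit_sphere:
  assumes "n > 0"
  obtains w where "(\<Sum>i<n. (w i)\<^sup>2) = 1"
    and "\<And>u. quad_form n A w * (\<Sum>i<n. (u i)\<^sup>2) \<le> quad_form n A u"
proof (rule continuous_map_attains_min_on_unit_sphere[OF assms continuous_map_quad_form[where A = A]])
  fix w assume w: "(\<Sum>i<n. (w i)\<^sup>2) = 1" and min:
    "\<And>u. u \<in> PiE {..<n} (\<lambda>_. UNIV) \<Longrightarrow> (\<Sum>i<n. (u i)\<^sup>2) = 1 \<Longrightarrow> quad_form n A w \<le> quad_form n A u"
  have "quad_form n A w * (\<Sum>i<n. (u i)\<^sup>2) \<le> quad_form n A u" for u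
  proof (cases "(\<Sum>i<n. (u i)\<^sup>2) = 0")
    case True
    then have "\<forall>i<n. u i = 0" by (simp add: sum_nonneg_eq_0_iff)
    then have "quad_form n A u = quad_form n A (\<lambda>_. 0)" by (intro quad_form_cong) simp
    then show ?thesis using True by (simp add: bilinear_form_def)
  next
    case False
    define S where "S = (\<Sum>i<n. (u i)\<^sup>2)"
    define c where "c = sqrt S"
    have "S > 0" using False unfolding S_def by (simp add: less_le sum_nonneg)
    then have c: "c > 0" "c\<^sup>2 = S" unfolding c_def by simp_all
    define u' where "u' = restrict (\<lambda>i. (1 / c) * u i) {..<n}"
    have "(\<Sum>i<n. (u' i)\<^sup>2) = (\<Sum>i<n. (1 / c)\<^sup>2 * (u i)\<^sup>2)"
      unfolding u'_def by (intro sum.cong refl) (simp add: power_divide)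
    also have "\<dots> = 1" using \<open>S > 0\<close> c unfolding S_def[symmetric] sum_distrib_left[symmetric] by (simp add: power_divide)
    finally have "quad_form n A w \<le> quad_form n A u'" by (intro min) (simp_all add: u'_def)
    also have "quad_form n A u' = (1 / c)\<^sup>2 * quad_form n A u"
      unfolding quad_form_smult[symmetric] by (rule quad_form_cong) (simp add: u'_def)
    finally show ?thesis using \<open>S > 0\<close> c unfolding S_def[symmetric] by (simp add: power_divide pos_le_divide_eq)
  qed
  with w show thesis by (rule that)
qed

lemma linear_coeff_zero_if_quadratic_nonneg:
  fixes b c :: real
  assumes "0 \<le> c" and nonneg: "\<And>t. 0 \<le> 2 * t * b + t\<^sup>2 * c"
  shows "b = 0"
proof (rule ccontr)
  assume "b \<noteq> 0"
  define t where "t = - b / (c + 1)"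
  have c1: "c + 1 > 0" using assms by simp
  have "0 \<le> (2 * t * b + t\<^sup>2 * c) * (c + 1)\<^sup>2" using nonneg c1 by simp
  also have "\<dots> = 2 * b * (t * (c + 1)) * (c + 1) + (t * (c + 1))\<^sup>2 * c"
    by (simp add: power2_eq_square algebra_simps)
  also have "t * (c + 1) = - b" using c1 unfolding t_def by simp
  also have "2 * b * (- b) * (c + 1) + (- b)\<^sup>2 * c = - b\<^sup>2 * (c + 2)"
    by (simp add: power2_eq_square algebra_simps)
  also have "\<dots> < 0" using \<open>b \<noteq> 0\<close> \<open>0 \<le> c\<close> by (simp add: mult_pos_pos)
  finally show False by simp
qed

lemma unit_sphere_minimizer_eigenvector:
  assumes A: "symmetric_mat n A"
    and w: "(\<Sum>i<n. (w i)\<^sup>2) = 1"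
    and min: "\<And>u. quad_form n A w * (\<Sum>i<n. (u i)\<^sup>2) \<le> quad_form n A u"
  shows "eigenvector A (vec n w) (quad_form n A w)"
proof -
  define m where "m = quad_form n A w"
  define z where "z i = (\<Sum>j<n. A $$ (i, j) * w j) - m * w i" for i
  have orth: "(\<Sum>i<n. u i * z i) = 0" for u
  proof (rule linear_coeff_zero_if_quadratic_nonneg)
    show "0 \<le> quad_form n A u - m * (\<Sum>i<n. (u i)\<^sup>2)" using min[of u] by (simp add: m_def)
  next
    fix t
    have "m * (\<Sum>i<n. (w i + t * u i)\<^sup>2) \<le> quad_form n A (\<lambda>i. w i + t * u i)"
      unfolding m_def by (rule min)
    moreover have "quad_form n A (\<lambda>i. w i + t * u i) = m + 2 * t * bilinear_form n A u w + t\<^sup>2 * quad_form n A u"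
      unfolding m_def by (rule quad_form_add_smult[OF A])
    moreover have "bilinear_form n A u w = (\<Sum>i<n. u i * z i) + m * (\<Sum>i<n. u i * w i)"
      unfolding bilinear_form_def z_def by (simp add: algebra_simps sum_distrib_left sum_subtractf)
    moreover have "(\<Sum>i<n. (w i + t * u i)\<^sup>2) = 1 + 2 * t * (\<Sum>i<n. u i * w i) + t\<^sup>2 * (\<Sum>i<n. (u i)\<^sup>2)"
      using w by (simp add: power2_eq_square algebra_simps sum.distrib sum_distrib_left)
    ultimately show "0 \<le> 2 * t * (\<Sum>i<n. u i * z i) + t\<^sup>2 * (quad_form n A u - m * (\<Sum>i<n. (u i)\<^sup>2))"
      by (simp add: algebra_simps)
  qed
  have "(\<Sum>i<n. (z i)\<^sup>2) = 0" using orth[of z] by (simp add: power2_eq_square)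
  then have z0: "z i = 0" if "i < n" for i using that by (simp add: sum_nonneg_eq_0_iff)
  have carrier: "A \<in> carrier_mat n n" using A by (simp add: symmetric_mat_def)
  show ?thesis unfolding eigenvector_def m_def[symmetric]
  proof (intro conjI)
    show "vec n w \<in> carrier_vec (dim_row A)" using carrier by simp
    show "vec n w \<noteq> 0\<^sub>v (dim_row A)"
    proof
      assume "vec n w = 0\<^sub>v (dim_row A)"
      then have "\<forall>i<n. w i = 0" using carrier by (metis carrier_matD(1) index_vec index_zero_vec(1))
      then show False using w by simp
    qed
    show "A *\<^sub>v vec n w = m \<cdot>\<^sub>v vec n w"
    proof (rule eq_vecI)
      fix i assume "i < dim_vec (m \<cdot>\<^sub>v vec n w)"
      then have i: "i < n" by simp
      have "(A *\<^sub>v vec n w) $ i = (\<Sum>j<n. A $$ (i, j) * w j)"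
        using carrier i by (simp add: mult_mat_vec_def scalar_prod_def lessThan_atLeast0 mult.commute)
      also have "\<dots> = m * w i" using z0[OF i] unfolding z_def by simp
      finally show "(A *\<^sub>v vec n w) $ i = (m \<cdot>\<^sub>v vec n w) $ i" using i by simp
    qed (use carrier in simp)
  qed
qed

lemma quad_form_ge_min_eigenvalue:
  assumes A: "symmetric_mat n A" and \<sigma>: "\<forall>k. eigenvalue A k \<longrightarrow> \<sigma> \<le> k"
  shows "\<sigma> * (\<Sum>i<n. (u i)\<^sup>2) \<le> quad_form n A u"
proof (cases "n = 0")
  case True
  then show ?thesis by (simp add: bilinear_form_def)
next
  case False
  then obtain w where w: "(\<Sum>i<n. (w i)\<^sup>2) = 1"
    and min: "\<And>u. quad_form n A w * (\<Sum>i<n. (u i)\<^sup>2) \<le> quad_form n A u"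
    using quad_form_min_on_unit_sphere by blast
  have "eigenvalue A (quad_form n A w)"
    using unit_sphere_minimizer_eigenvector[OF A w min] unfolding eigenvalue_def by blast
  then have "\<sigma> * (\<Sum>i<n. (u i)\<^sup>2) \<le> quad_form n A w * (\<Sum>i<n. (u i)\<^sup>2)"
    using \<sigma> by (intro mult_right_mono) (auto intro: sum_nonneg)
  also have "\<dots> \<le> quad_form n A u" by (rule min)
  finally show ?thesis .
qed

section \<open>The Frobenius norm\<close>

definition frobenius_norm :: "real mat \<Rightarrow> real" where
  "frobenius_norm A = L2_set (($$) A) ({..<dim_row A} \<times> {..<dim_col A})"

lemma frobenius_norm_carrier:
  "A \<in> carrier_mat n n \<Longrightarrow> frobenius_norm A = sqrt (\<Sum>i<n. \<Sum>j<n. (A $$ (i, j))\<^sup>2)"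
  unfolding frobenius_norm_def L2_set_def by (simp add: sum.cartesian_product case_prod_beta)

lemma frobenius_norm_diff_le:
  assumes "A \<in> carrier_mat n m" "B \<in> carrier_mat n m"
  shows "frobenius_norm (A - B) \<le> frobenius_norm A + frobenius_norm B"
proof -
  let ?P = "{..<n} \<times> {..<m}"
  have "frobenius_norm (A - B) = L2_set (\<lambda>x. A $$ x + - B $$ x) ?P"
    using assms unfolding frobenius_norm_def by (intro L2_set_cong) auto
  also have "\<dots> \<le> L2_set (($$) A) ?P + L2_set (\<lambda>x. - B $$ x) ?P"
    by (rule L2_set_triangle_ineq)
  also have "\<dots> = frobenius_norm A + frobenius_norm B"
    using assms by (simp add: frobenius_norm_def L2_set_def)
  finally show ?thesis .
qed

lemma frobenius_norm_le_entrywise: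
  fixes \<delta> :: real
  assumes A: "A \<in> carrier_mat n n" and "0 \<le> \<delta>"
    and entries: "\<And>i j. i < n \<Longrightarrow> j < n \<Longrightarrow> \<bar>A $$ (i, j)\<bar> \<le> \<delta>"
  shows "frobenius_norm A \<le> n * \<delta>"
proof -
  have "(\<Sum>i<n. \<Sum>j<n. (A $$ (i, j))\<^sup>2) \<le> (\<Sum>i<n. \<Sum>j<n. \<delta>\<^sup>2)"
    using entries \<open>0 \<le> \<delta>\<close> by (intro sum_mono) (simp add: abs_le_square_iff[symmetric])
  also have "\<dots> = (n * \<delta>)\<^sup>2" by (simp add: power2_eq_square)
  finally show ?thesis
    using A \<open>0 \<le> \<delta>\<close> by (simp add: frobenius_norm_carrier real_le_lsqrt)
qed

lemma abs_quad_form_le: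
  assumes "A \<in> carrier_mat n n"
  shows "\<bar>quad_form n A u\<bar> \<le> frobenius_norm A * (\<Sum>i<n. (u i)\<^sup>2)"
proof -
  let ?P = "{..<n} \<times> {..<n}"
  have "quad_form n A u = (\<Sum>x\<in>?P. A $$ x * (u (fst x) * u (snd x)))"
    unfolding bilinear_form_def by (simp add: sum.cartesian_product case_prod_beta algebra_simps)
  then have "\<bar>quad_form n A u\<bar> \<le> (\<Sum>x\<in>?P. \<bar>A $$ x\<bar> * \<bar>u (fst x) * u (snd x)\<bar>)"
    by (simp add: sum_abs[THEN order_trans] abs_mult)
  also have "\<dots> \<le> L2_set (($$) A) ?P * L2_set (\<lambda>x. u (fst x) * u (snd x)) ?P"
    by (rule L2_set_mult_ineq)
  also have "L2_set (\<lambda>x. u (fst x) * u (snd x)) ?P = (\<Sum>i<n. (u i)\<^sup>2)"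
  proof -
    have "(\<Sum>x\<in>?P. (u (fst x) * u (snd x))\<^sup>2) = (\<Sum>i<n. (u i)\<^sup>2)\<^sup>2"
      by (simp add: power2_eq_square sum_product sum.cartesian_product case_prod_beta algebra_simps)
    then show ?thesis unfolding L2_set_def by (simp add: sum_nonneg)
  qed
  finally show ?thesis using assms by (simp add: frobenius_norm_def)
qed

lemma pos_def_mat_if_frobenius_close:
  assumes A: "symmetric_mat n A" and \<sigma>: "\<forall>k. eigenvalue A k \<longrightarrow> \<sigma> \<le> k"
    and B: "symmetric_mat n B" and close: "frobenius_norm (B - A) < \<sigma>"
  shows "pos_def_mat n B"
  unfolding pos_def_mat_def
proof (intro conjI ballI impI B)
  fix v :: "real vec" assume v: "v \<in> carrier_vec n" and "v \<noteq> 0\<^sub>v n"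
  then obtain i where "i < n" "v $ i \<noteq> 0" by (metis carrier_vecD eq_vecI index_zero_vec)
  then have S: "(\<Sum>i<n. (v $ i)\<^sup>2) > 0" by (intro sum_pos2[of _ i]) auto
  have carrier: "A \<in> carrier_mat n n" "B \<in> carrier_mat n n"
    using A B by (auto simp: symmetric_mat_def)
  then have "v \<bullet> (B *\<^sub>v v) = quad_form n A (($) v) + quad_form n (B - A) (($) v)"
    using v by (simp add: scalar_prod_mult_mat_vec_eq_quad_form quad_form_diff)
  moreover have "\<sigma> * (\<Sum>i<n. (v $ i)\<^sup>2) \<le> quad_form n A (($) v)"
    by (rule quad_form_ge_min_eigenvalue[OF A \<sigma>])
  moreover have "\<bar>quad_form n (B - A) (($) v)\<bar> \<le> frobenius_norm (B - A) * (\<Sum>i<n. (v $ i)\<^sup>2)"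
    using carrier by (intro abs_quad_form_le) auto
  moreover have "frobenius_norm (B - A) * (\<Sum>i<n. (v $ i)\<^sup>2) < \<sigma> * (\<Sum>i<n. (v $ i)\<^sup>2)"
    using close S by simp
  ultimately show "0 < v \<bullet> (B *\<^sub>v v)" by linarith
qed

section \<open>Antidiagonals and Hankel matrices\<close>

definition antidiag :: "nat \<Rightarrow> nat \<Rightarrow> nat set" where
  "antidiag n k = {i. i < n \<and> i \<le> k \<and> k - i < n}"

lemma antidiag_eq: "antidiag n k = {k + 1 - n ..< min n (k + 1)}"
  unfolding antidiag_def by auto

lemma finite_antidiag [simp]: "finite (antidiag n k)"
  by (simp add: antidiag_eq)

lemma card_antidiag: "k < 2 * n - 1 \<Longrightarrow> card (antidiag n k) = hank_s n k"
  unfolding antidiag_eq hank_s_def by auto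

lemma antidiag_empty: "2 * n - 1 \<le> k \<Longrightarrow> antidiag n k = {}"
  unfolding antidiag_eq by auto

lemma hank_s_pos: "k < 2 * n - 1 \<Longrightarrow> hank_s n k > 0"
  unfolding hank_s_def by auto

lemma sum_by_antidiags:
  fixes h :: "nat \<Rightarrow> nat \<Rightarrow> 'a::comm_monoid_add"
  shows "(\<Sum>i<n. \<Sum>j<n. h i j) = (\<Sum>k<2 * n - 1. \<Sum>i\<in>antidiag n k. h i (k - i))"
proof -
  have "(\<Sum>i<n. \<Sum>j<n. h i j) = (\<Sum>x\<in>{..<n} \<times> {..<n}. h (fst x) (snd x))"
    by (simp add: sum.cartesian_product case_prod_beta)
  also have "\<dots> = (\<Sum>k<2 * n - 1. \<Sum>x\<in>{x\<in>{..<n} \<times> {..<n}. fst x + snd x = k}. h (fst x) (snd x))"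
    by (rule sum.group[symmetric]) auto
  also have "\<dots> = (\<Sum>k<2 * n - 1. \<Sum>i\<in>antidiag n k. h i (k - i))"
  proof (rule sum.cong[OF refl])
    fix k
    have "{x\<in>{..<n} \<times> {..<n}. fst x + snd x = k} = (\<lambda>i. (i, k - i)) ` antidiag n k"
      unfolding antidiag_def by force
    moreover have "inj_on (\<lambda>i. (i, k - i)) (antidiag n k)" by (auto intro: inj_onI)
    ultimately show "(\<Sum>x\<in>{x\<in>{..<n} \<times> {..<n}. fst x + snd x = k}. h (fst x) (snd x)) =
        (\<Sum>i\<in>antidiag n k. h i (k - i))"
      by (simp add: sum.reindex)
  qed
  finally show ?thesis .
qed

lemma coeff_quad_poly:
  assumes "M \<in> carrier_mat n n"
  shows "coeff (quad_poly M) k = (\<Sum>i\<in>antidiag n k. M $$ (i, k - i))"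
proof -
  have "coeff (quad_poly M) k = (\<Sum>i<n. \<Sum>j<n. if i + j = k then M $$ (i, j) else 0)"
    using assms unfolding quad_poly_def by (simp add: coeff_sum coeff_monom eq_commute)
  also have "\<dots> = (\<Sum>i<n. if i \<in> antidiag n k then M $$ (i, k - i) else 0)"
  proof (rule sum.cong[OF refl])
    fix i assume "i \<in> {..<n}"
    show "(\<Sum>j<n. if i + j = k then M $$ (i, j) else 0) = (if i \<in> antidiag n k then M $$ (i, k - i) else 0)"
    proof (cases "i \<le> k")
      case True
      then have "(\<Sum>j<n. if i + j = k then M $$ (i, j) else 0) = (\<Sum>j<n. if j = k - i then M $$ (i, k - i) else 0)"
        by (intro sum.cong) auto
      with True \<open>i \<in> {..<n}\<close> show ?thesis by (simp add: antidiag_def)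
    qed (auto simp: antidiag_def)
  qed
  also have "\<dots> = (\<Sum>i\<in>antidiag n k. M $$ (i, k - i))"
    by (simp add: sum.inter_filter[symmetric] antidiag_def conj_commute)
  finally show ?thesis .
qed

lemma quad_poly_diff:
  assumes "A \<in> carrier_mat n n" "B \<in> carrier_mat n n"
  shows "quad_poly (A - B) = quad_poly A - quad_poly B"
proof -
  have "A - B \<in> carrier_mat n n" using assms(2) by (rule minus_carrier_mat)
  then show ?thesis
    using assms by (intro poly_eqI) (auto simp: coeff_quad_poly[of _ n] antidiag_def
        sum_subtractf[symmetric] intro!: sum.cong)
qed

lemma quad_poly_map_of_rat:
  assumes "Q \<in> carrier_mat n n"
  shows "quad_poly (map_mat of_rat Q) = map_poly (of_rat :: rat \<Rightarrow> 'a::field_char_0) (quad_poly Q)"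
  using assms
  by (intro poly_eqI) (auto simp: coeff_quad_poly[of _ n] coeff_map_poly of_rat_sum antidiag_def intro!: sum.cong)

lemma dim_hankel_mat [simp]: "dim_row (hankel_mat n p) = n" "dim_col (hankel_mat n p) = n"
  by (simp_all add: hankel_mat_def)

lemma hankel_mat_carrier: "hankel_mat n p \<in> carrier_mat n n"
  by (simp add: hankel_mat_def)

lemma index_hankel_mat [simp]:
  "i < n \<Longrightarrow> j < n \<Longrightarrow> hankel_mat n p $$ (i, j) = coeff p (i + j) / of_nat (hank_s n (i + j))"
  by (simp add: hankel_mat_def)

lemma dim_proj_mat [simp]: "dim_row (proj_mat n p Q) = n" "dim_col (proj_mat n p Q) = n"
  by (simp_all add: proj_mat_def)

lemma proj_mat_carrier: "proj_mat n p Q \<in> carrier_mat n n"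
  by (simp add: carrier_matI)

lemma index_proj_mat:
  assumes "Q \<in> carrier_mat n n" "i < n" "j < n"
  shows "proj_mat n p Q $$ (i, j) = Q $$ (i, j) - coeff (quad_poly Q - p) (i + j) / of_nat (hank_s n (i + j))"
  using assms by (simp add: proj_mat_def)

lemma symmetric_proj_mat:
  assumes "symmetric_mat n Q"
  shows "symmetric_mat n (proj_mat n p Q)"
proof -
  have Q: "Q \<in> carrier_mat n n" using assms by (simp add: symmetric_mat_def)
  show ?thesis unfolding symmetric_mat_def
    using Q symmetric_matD[OF assms]
    by (auto intro!: eq_matI simp: index_proj_mat add.commute)
qed

interpretation of_rat_poly_hom: map_poly_comm_ring_hom "of_rat :: rat \<Rightarrow> 'a::field_char_0" ..

lemma proj_mat_map_of_rat:
  assumes "Q \<in> carrier_mat n n"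
  shows "map_mat of_rat (proj_mat n p Q) =
    proj_mat n (map_poly of_rat p) (map_mat (of_rat :: rat \<Rightarrow> 'a::field_char_0) Q)"
  using assms
  by (intro eq_matI) (auto simp: index_proj_mat proj_mat_carrier quad_poly_map_of_rat of_rat_diff
      of_rat_divide coeff_map_poly of_rat_poly_hom.hom_minus)

text \<open>The Hankel correction adds \<open>(p\<^sub>k - c\<^sub>k) / s\<^sub>k\<close> to each of the \<open>s\<^sub>k\<close> entries of the
  \<open>k\<close>-th antidiagonal, whose entries sum to the coefficient \<open>c\<^sub>k\<close> of \<open>x\<^sup>TQx\<close>.\<close>

lemma quad_poly_proj_mat:
  assumes Q: "Q \<in> carrier_mat n n" and p: "\<And>k. 2 * n - 1 \<le> k \<Longrightarrow> coeff p k = 0"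
  shows "quad_poly (proj_mat n p Q) = p"
proof (rule poly_eqI)
  fix k
  let ?c = "coeff (quad_poly Q - p) k"
  have "coeff (quad_poly (proj_mat n p Q)) k = (\<Sum>i\<in>antidiag n k. Q $$ (i, k - i) - ?c / of_nat (hank_s n k))"
    using Q by (auto simp: coeff_quad_poly[of _ n] proj_mat_carrier index_proj_mat antidiag_def
        intro!: sum.cong)
  also have "\<dots> = coeff (quad_poly Q) k - of_nat (card (antidiag n k)) * (?c / of_nat (hank_s n k))"
    using Q by (simp add: sum_subtractf coeff_quad_poly)
  also have "\<dots> = coeff p k"
  proof (cases "k < 2 * n - 1")
    case True
    then show ?thesis using hank_s_pos[OF True] by (simp add: card_antidiag)
  next
    case False
    then show ?thesis using p Q by (simp add: coeff_quad_poly antidiag_empty)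
  qed
  finally show "coeff (quad_poly (proj_mat n p Q)) k = coeff p k" .
qed

section \<open>Polynomial norms\<close>

lemma poly_norm_nonneg: "0 \<le> poly_norm p"
  by (simp add: poly_norm_def sum_nonneg)

lemma poly_norm_eq_L2_set:
  assumes "degree p \<le> N"
  shows "poly_norm p = L2_set (coeff p) {..N}"
  unfolding poly_norm_def L2_set_def using assms
  by (intro arg_cong[where f = sqrt] sum.mono_neutral_left) (auto simp: coeff_eq_0)

lemma L2_set_coeff_lessThan_le: "L2_set (coeff p) {..<N} \<le> poly_norm p"
proof -
  have "L2_set (coeff p) {..<N} \<le> L2_set (coeff p) {..max N (degree p)}"
    unfolding L2_set_def by (intro real_sqrt_le_mono sum_mono2) auto
  also have "\<dots> = poly_norm p" by (rule poly_norm_eq_L2_set[symmetric]) simp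
  finally show ?thesis .
qed

lemma poly_norm_add_le: "poly_norm (p + q) \<le> poly_norm p + poly_norm q"
proof -
  define N where "N = max (degree p) (degree q)"
  have "poly_norm (p + q) = L2_set (coeff (p + q)) {..N}"
    by (rule poly_norm_eq_L2_set) (simp add: N_def degree_add_le)
  also have "\<dots> = L2_set (\<lambda>i. coeff p i + coeff q i) {..N}"
    by (rule L2_set_cong) simp_all
  also have "\<dots> \<le> L2_set (coeff p) {..N} + L2_set (coeff q) {..N}"
    by (rule L2_set_triangle_ineq)
  also have "\<dots> = poly_norm p + poly_norm q"
    by (simp add: poly_norm_eq_L2_set[of _ N] N_def)
  finally show ?thesis .
qed

lemma poly_norm_sum_le: "finite A \<Longrightarrow> poly_norm (\<Sum>i\<in>A. p i) \<le> (\<Sum>i\<in>A. poly_norm (p i))"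
proof (induction A rule: finite_induct)
  case (insert x F)
  then show ?case using poly_norm_add_le[of "p x" "sum p F"] by simp
qed (simp add: poly_norm_def)

lemma poly_norm_monom_mult: "poly_norm (monom c i * p) = \<bar>c\<bar> * poly_norm p"
proof -
  define d where "d = degree p"
  have "poly_norm (monom c i * p) = L2_set (coeff (monom c i * p)) {..i + d}"
    by (rule poly_norm_eq_L2_set) (simp add: d_def order_trans[OF degree_mult_le] degree_monom_le)
  also have "\<dots> = sqrt (\<Sum>k\<in>{i..i + d}. (c * coeff p (k - i))\<^sup>2)"
    unfolding L2_set_def coeff_monom_mult by (intro arg_cong[where f = sqrt] sum.mono_neutral_cong_right) auto
  also have "(\<Sum>k\<in>{i..i + d}. (c * coeff p (k - i))\<^sup>2) = (\<Sum>j\<le>d. (c * coeff p j)\<^sup>2)"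
    using sum.shift_bounds_cl_nat_ivl[of "\<lambda>k. (c * coeff p (k - i))\<^sup>2" 0 i d]
    by (simp add: add.commute atLeast0AtMost)
  also have "sqrt \<dots> = \<bar>c\<bar> * poly_norm p"
    unfolding poly_norm_def d_def by (simp add: power_mult_distrib sum_distrib_left[symmetric] real_sqrt_mult)
  finally show ?thesis .
qed

lemma poly_norm_mult_le:
  fixes d f :: "real poly" and m :: nat and \<delta> :: real
  assumes "\<And>i. m \<le> i \<Longrightarrow> coeff d i = 0" and "\<And>i. i < m \<Longrightarrow> \<bar>coeff d i\<bar> \<le> \<delta>"
  shows "poly_norm (d * f) \<le> m * \<delta> * poly_norm f"
proof -
  have "d = (\<Sum>i<m. monom (coeff d i) i)"
    using assms(1) by (intro poly_eqI) (auto simp: coeff_sum coeff_monom not_less)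
  then have "poly_norm (d * f) = poly_norm (\<Sum>i<m. monom (coeff d i) i * f)"
    by (metis sum_distrib_right)
  also have "\<dots> \<le> (\<Sum>i<m. \<bar>coeff d i\<bar> * poly_norm f)"
    using poly_norm_sum_le[of "{..<m}" "\<lambda>i. monom (coeff d i) i * f"] by (simp add: poly_norm_monom_mult)
  also have "\<dots> \<le> (\<Sum>i<m. \<delta> * poly_norm f)"
    using assms(2) by (intro sum_mono mult_right_mono poly_norm_nonneg) auto
  finally show ?thesis by simp
qed

lemma coeff_mult_eq_0:
  assumes "\<And>i. a \<le> i \<Longrightarrow> coeff p i = 0" "\<And>j. b \<le> j \<Longrightarrow> coeff q j = 0" "a + b \<le> k + 1"
  shows "coeff (p * q) k = 0"
  unfolding coeff_mult
proof (intro sum.neutral ballI)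
  fix i assume "i \<in> {..k}"
  then show "coeff p i * coeff q (k - i) = 0"
    using assms(1)[of i] assms(2)[of "k - i"] assms(3) by (cases "a \<le> i") auto
qed

lemma poly_norm_quad_poly_residual_le:
  fixes A :: "real mat" and g q qs f :: "real poly" and m :: nat and \<delta> :: real
  assumes "\<And>i. m \<le> i \<Longrightarrow> coeff q i = 0" "\<And>i. m \<le> i \<Longrightarrow> coeff qs i = 0"
    and "\<And>i. i < m \<Longrightarrow> \<bar>coeff q i - coeff qs i\<bar> \<le> \<delta>"
  shows "poly_norm (quad_poly A - (g - q * f)) \<le> poly_norm (quad_poly A + qs * f - g) + m * \<delta> * poly_norm f"
proof -
  have "quad_poly A - (g - q * f) = (quad_poly A + qs * f - g) + (q - qs) * f"
    by (simp add: algebra_simps)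
  then have "poly_norm (quad_poly A - (g - q * f)) \<le> poly_norm (quad_poly A + qs * f - g) + poly_norm ((q - qs) * f)"
    by (simp only: poly_norm_add_le)
  moreover have "poly_norm ((q - qs) * f) \<le> m * \<delta> * poly_norm f"
    using assms by (intro poly_norm_mult_le) auto
  ultimately show ?thesis by linarith
qed

section \<open>The Frobenius norm of the projection\<close>

lemma sum_sq_deviation_le:
  fixes x :: "'a \<Rightarrow> real"
  assumes "finite S"
  shows "(\<Sum>i\<in>S. (x i - (\<Sum>j\<in>S. x j) / card S)\<^sup>2) \<le> (\<Sum>i\<in>S. (x i)\<^sup>2)"
proof (cases "S = {}")
  case True
  then show ?thesis by simp
next
  case False
  define s where "s = (\<Sum>j\<in>S. x j)"
  define c where "c = real (card S)"
  have c: "c > 0" using False assms unfolding c_def by (simp add: card_gt_0_iff)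
  have "(\<Sum>i\<in>S. (x i - s / c)\<^sup>2) = (\<Sum>i\<in>S. (x i)\<^sup>2 - 2 * (s / c) * x i + (s / c)\<^sup>2)"
    by (intro sum.cong refl) (simp add: power2_eq_square algebra_simps)
  also have "\<dots> = (\<Sum>i\<in>S. (x i)\<^sup>2) - 2 * (s / c) * s + c * (s / c)\<^sup>2"
    by (simp add: sum.distrib sum_subtractf sum_distrib_left[symmetric] sum_divide_distrib[symmetric]
        s_def c_def)
  also have "\<dots> = (\<Sum>i\<in>S. (x i)\<^sup>2) - s\<^sup>2 / c"
    using c by (simp add: power2_eq_square field_simps)
  also have "\<dots> \<le> (\<Sum>i\<in>S. (x i)\<^sup>2)" using c by simp
  finally show ?thesis unfolding s_def c_def .
qed

lemma frobenius_norm_by_antidiags: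
  assumes "A \<in> carrier_mat n n"
  shows "frobenius_norm A = sqrt (\<Sum>k<2 * n - 1. \<Sum>i\<in>antidiag n k. (A $$ (i, k - i))\<^sup>2)"
  using assms by (simp add: frobenius_norm_carrier sum_by_antidiags[of "\<lambda>i j. (A $$ (i, j))\<^sup>2"])

lemma frobenius_norm_sub_hankel_quad_poly_le:
  assumes E: "E \<in> carrier_mat n n"
  shows "frobenius_norm (E - hankel_mat n (quad_poly E)) \<le> frobenius_norm E"
proof -
  have "(\<Sum>i\<in>antidiag n k. ((E - hankel_mat n (quad_poly E)) $$ (i, k - i))\<^sup>2)
      \<le> (\<Sum>i\<in>antidiag n k. (E $$ (i, k - i))\<^sup>2)" if k: "k < 2 * n - 1" for k
  proof -
    have "(\<Sum>i\<in>antidiag n k. ((E - hankel_mat n (quad_poly E)) $$ (i, k - i))\<^sup>2) =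
        (\<Sum>i\<in>antidiag n k. (E $$ (i, k - i) - (\<Sum>j\<in>antidiag n k. E $$ (j, k - j)) / card (antidiag n k))\<^sup>2)"
    proof (rule sum.cong[OF refl])
      fix i assume "i \<in> antidiag n k"
      then have "i < n" "k - i < n" "i + (k - i) = k" by (auto simp: antidiag_def)
      then show "((E - hankel_mat n (quad_poly E)) $$ (i, k - i))\<^sup>2 =
          (E $$ (i, k - i) - (\<Sum>j\<in>antidiag n k. E $$ (j, k - j)) / card (antidiag n k))\<^sup>2"
        using E k by (simp add: coeff_quad_poly card_antidiag)
    qed
    also have "\<dots> \<le> (\<Sum>i\<in>antidiag n k. (E $$ (i, k - i))\<^sup>2)"
      by (rule sum_sq_deviation_le) simp
    finally show ?thesis .
  qed
  then have "(\<Sum>k<2 * n - 1. \<Sum>i\<in>antidiag n k. ((E - hankel_mat n (quad_poly E)) $$ (i, k - i))\<^sup>2)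
      \<le> (\<Sum>k<2 * n - 1. \<Sum>i\<in>antidiag n k. (E $$ (i, k - i))\<^sup>2)"
    by (rule sum_mono) simp
  moreover have "E - hankel_mat n (quad_poly E) \<in> carrier_mat n n"
    by (rule minus_carrier_mat[OF hankel_mat_carrier])
  ultimately show ?thesis using E by (simp add: frobenius_norm_by_antidiags)
qed

lemma frobenius_norm_hankel_mat_le: "frobenius_norm (hankel_mat n p) \<le> poly_norm p"
proof -
  have "(\<Sum>i\<in>antidiag n k. (hankel_mat n p $$ (i, k - i))\<^sup>2) \<le> (coeff p k)\<^sup>2"
    if k: "k < 2 * n - 1" for k
  proof -
    define s where "s = real (hank_s n k)"
    have s: "s \<ge> 1" using hank_s_pos[OF k] unfolding s_def by simp
    have "(\<Sum>i\<in>antidiag n k. (hankel_mat n p $$ (i, k - i))\<^sup>2) = (\<Sum>i\<in>antidiag n k. (coeff p k / s)\<^sup>2)"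
      by (intro sum.cong refl) (auto simp: antidiag_def s_def)
    also have "\<dots> = s * (coeff p k / s)\<^sup>2" using k by (simp add: card_antidiag s_def)
    also have "\<dots> = (coeff p k)\<^sup>2 / s" using s by (simp add: power2_eq_square)
    also have "\<dots> \<le> (coeff p k)\<^sup>2" using s by (simp add: divide_le_eq mult_le_cancel_left1)
    finally show ?thesis .
  qed
  then have "(\<Sum>k<2 * n - 1. \<Sum>i\<in>antidiag n k. (hankel_mat n p $$ (i, k - i))\<^sup>2)
      \<le> (\<Sum>k<2 * n - 1. (coeff p k)\<^sup>2)"
    by (rule sum_mono) simp
  then have "frobenius_norm (hankel_mat n p) \<le> L2_set (coeff p) {..<2 * n - 1}"
    by (simp add: frobenius_norm_by_antidiags[OF hankel_mat_carrier] L2_set_def)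
  also have "\<dots> \<le> poly_norm p" by (rule L2_set_coeff_lessThan_le)
  finally show ?thesis .
qed

lemma frobenius_norm_proj_mat_diff_le:
  fixes A B :: "real mat"
  assumes A: "A \<in> carrier_mat n n" and B: "B \<in> carrier_mat n n"
  shows "frobenius_norm (proj_mat n p B - A) \<le> frobenius_norm (B - A) + poly_norm (quad_poly A - p)"
proof -
  define E where "E = B - A"
  have E: "E \<in> carrier_mat n n" unfolding E_def using A by (rule minus_carrier_mat)
  have "quad_poly B - p = quad_poly E + (quad_poly A - p)"
    using A B by (simp add: E_def quad_poly_diff)
  then have "proj_mat n p B - A = (E - hankel_mat n (quad_poly E)) - hankel_mat n (quad_poly A - p)"
    using A B by (intro eq_matI) (auto simp: index_proj_mat E_def add_divide_distrib diff_divide_distrib)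
  then have "frobenius_norm (proj_mat n p B - A) \<le>
      frobenius_norm (E - hankel_mat n (quad_poly E)) + frobenius_norm (hankel_mat n (quad_poly A - p))"
    by (simp add: frobenius_norm_diff_le[of _ n n] carrier_matI)
  also have "\<dots> \<le> frobenius_norm E + poly_norm (quad_poly A - p)"
    by (intro add_mono frobenius_norm_sub_hankel_quad_poly_le E frobenius_norm_hankel_mat_le)
  finally show ?thesis unfolding E_def .
qed

lemma delta_choice_bound:
  fixes F \<rho> \<sigma> \<delta> :: real
  assumes "0 \<le> F" "0 < \<delta>" and \<delta>: "\<delta> < (\<sigma> - \<rho>) / (real n + (real n - 1) * sqrt (real n) * F)"
  shows "real n * \<delta> + (\<rho> + real (n - 1) * \<delta> * F) < \<sigma>"
proof -
  define den where "den = real n + (real n - 1) * sqrt (real n) * F"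
  have "n \<noteq> 0" using assms by (cases n) auto
  then have n: "1 \<le> n" "1 \<le> sqrt (real n)" by auto
  then have "0 < den" using \<open>0 \<le> F\<close> by (simp add: den_def add_pos_nonneg)
  then have "\<delta> * den < \<sigma> - \<rho>" using \<delta> by (simp add: den_def pos_less_divide_eq)
  moreover have "(real n - 1) * F * \<delta> * 1 \<le> (real n - 1) * F * \<delta> * sqrt (real n)"
    using n assms by (intro mult_left_mono) auto
  ultimately show ?thesis using n by (simp add: den_def of_nat_diff algebra_simps)
qed

theorem mainTheorem10:
  fixes f g :: "rat poly" and n :: nat
    and Qs :: "real mat" and \<sigma> :: real and qs :: "real poly" and \<delta> :: real
  assumes hf: "degree f = n"
    and hg: "\<forall>i. 2 * n < i + 2 \<longrightarrow> coeff g i = 0"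
    and hQs: "pos_def_mat n Qs"
    and h\<sigma>: "eigenvalue Qs \<sigma>" "\<forall>k. eigenvalue Qs k \<longrightarrow> \<sigma> \<le> k" "\<sigma> > 0"
    and hqs: "\<forall>i. n < i + 2 \<longrightarrow> coeff qs i = 0"
    and h\<rho>: "poly_norm (quad_poly Qs + qs * map_poly of_rat f - map_poly of_rat g) < \<sigma>"
    and h\<delta>0: "0 < \<delta>"
    and h\<delta>: "\<delta> < (\<sigma> - poly_norm (quad_poly Qs + qs * map_poly of_rat f - map_poly of_rat g))
                / (real n + (real n - 1) * sqrt (real n) * poly_norm (map_poly of_rat f))"
  shows "\<forall>Qb :: rat mat. \<forall>q :: rat poly.
           symmetric_mat n Qb \<longrightarrow>
           (\<forall>i. n < i + 2 \<longrightarrow> coeff q i = 0) \<longrightarrow>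
           (\<forall>i<n. \<forall>j<n. \<bar>of_rat (Qb $$ (i,j)) - Qs $$ (i,j)\<bar> \<le> \<delta>) \<longrightarrow>
           (\<forall>i. i + 2 \<le> n \<longrightarrow> \<bar>of_rat (coeff q i) - coeff qs i\<bar> \<le> \<delta>) \<longrightarrow>
           (let Q = proj_mat n (g - q * f) Qb in
              symmetric_mat n Q \<and> g = quad_poly Q + q * f
              \<and> pos_def_mat n (map_mat of_rat Q))"
proof (intro allI impI)
  fix Qb :: "rat mat" and q :: "rat poly"
  assume Qb: "symmetric_mat n Qb" and hq: "\<forall>i. n < i + 2 \<longrightarrow> coeff q i = 0"
    and Qb_close: "\<forall>i<n. \<forall>j<n. \<bar>of_rat (Qb $$ (i,j)) - Qs $$ (i,j)\<bar> \<le> \<delta>"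
    and q_close: "\<forall>i. i + 2 \<le> n \<longrightarrow> \<bar>of_rat (coeff q i) - coeff qs i\<bar> \<le> \<delta>"
  let ?R = "map_poly (of_rat :: rat \<Rightarrow> real)"
  define Q where "Q = proj_mat n (g - q * f) Qb"
  have Qb_carrier: "Qb \<in> carrier_mat n n" and Qs: "symmetric_mat n Qs"
    using Qb hQs by (auto simp: symmetric_mat_def pos_def_mat_def)
  have "coeff (g - q * f) k = 0" if "2 * n - 1 \<le> k" for k
    using that hq hf hg coeff_mult_eq_0[where a = "n - 1" and b = "n + 1" and p = q and q = f]
    by (auto simp: coeff_eq_0)
  then have quad: "quad_poly Q = g - q * f"
    unfolding Q_def by (rule quad_poly_proj_mat[OF Qb_carrier])
  have "frobenius_norm (map_mat of_rat Q - Qs) \<le>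
      frobenius_norm (map_mat of_rat Qb - Qs) + poly_norm (quad_poly Qs - ?R (g - q * f))"
    unfolding Q_def proj_mat_map_of_rat[OF Qb_carrier] using Qb_carrier Qs
    by (intro frobenius_norm_proj_mat_diff_le) (auto simp: symmetric_mat_def)
  also have "\<dots> \<le> n * \<delta> +
      (poly_norm (quad_poly Qs + qs * ?R f - ?R g) + real (n - 1) * \<delta> * poly_norm (?R f))"
    unfolding of_rat_poly_hom.hom_minus of_rat_poly_hom.hom_mult
    using Qb_carrier Qs Qb_close h\<delta>0 hq hqs q_close
    by (intro add_mono frobenius_norm_le_entrywise poly_norm_quad_poly_residual_le)
      (auto simp: symmetric_mat_def)
  also have "\<dots> < \<sigma>"
    by (rule delta_choice_bound[OF poly_norm_nonneg h\<delta>0 h\<delta>])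
  finally have "pos_def_mat n (map_mat of_rat Q)"
    using symmetric_mat_map[OF symmetric_proj_mat[OF Qb]]
    by (intro pos_def_mat_if_frobenius_close[OF Qs h\<sigma>(2)]) (simp_all add: Q_def)
  then show "let Q = proj_mat n (g - q * f) Qb in
      symmetric_mat n Q \<and> g = quad_poly Q + q * f \<and> pos_def_mat n (map_mat of_rat Q)"
    using symmetric_proj_mat[OF Qb] quad unfolding Q_def Let_def by simp
qed

end
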